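(* Let $\Psi$ be the standard normal CDF, $c>0$ a fixed constant, $\tau>0$ fixed (the paper uses $\tau=100$), and $g(u)=-2\ln\Psi(c-u)$. Consider a ray $\mathbf{x}(t)=\mathbf{o}+t\boldsymbol{\omega}$ intersecting Gaussian surfels $\mathcal{G}_1,\dots,\mathcal{G}_N$ with weights $w_i>0$ and colors $\mathbf{c}_i$, where $\mathcal{G}_i(\mathbf{x})=\exp\bigl(-\tfrac12(\mathbf{x}-\mathbf{m}_i)^T\Sigma_i^{-1}(\mathbf{x}-\mathbf{m}_i)\bigr)$ is a planar (2D) Gaussian with center $\mathbf{m}_i$ and covariance $\Sigma_i$, the ray meets the plane of surfel $i$ at depth $t_i$, and $f_i=w_i\mathcal{G}_i(\mathbf{x}(t_i))$. Define the blended colors $$\widehat{\mathbf{c}}_i=\frac{\sum_{j=1}^N(1-\exp(-w_j))\exp(-\tau|t_j-t_i|)\,\mathbf{c}_j}{\sum_{j=1}^N(1-\exp(-w_j))\exp(-\tau|t_j-t_i|)},$$ and the rendered color $$\mathbf{C}=\sum_{i=1}^N\widehat{\mathbf{c}}_i\bigl(1-\exp(-g(f_i))\bigr)\prod_{j=1}^{i-1}\exp(-g(f_j)),$$ where the surfels are sorted by increasing $t_i$ (ties broken arbitrarily). Then $\mathbf{C}$ is a continuous function of the properties of the Gaussian surfels (in particular it does not jump when two surfels' intersection depths cross and their ordering changes). *)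

theory Defs
  imports "HOL-Analysis.Analysis" "HOL-Probability.Distributions"
begin

definition Psi :: "real \<Rightarrow> real" where
  "Psi x = (LINT y:{..x}|lborel. std_normal_density y)"

definition gfun :: "real \<Rightarrow> real \<Rightarrow> real" where
  "gfun c u = - 2 * ln (Psi (c - u))"

text \<open>Parameters of N Gaussian surfels (indices 0..<N; values at indices \<ge> N are ignored):
  center m i, tangent vectors u i, v i (the planar covariance is
  Sigma i = u i u i^T + v i v i^T, i.e. u i = s_u t_u, v i = s_v t_v), weight w i, colour col i.\<close>
type_synonym surfels =
  "(nat \<Rightarrow> real^3) \<times> (nat \<Rightarrow> real^3) \<times> (nat \<Rightarrow> real^3) \<times> (nat \<Rightarrow> real) \<times> (nat \<Rightarrow> real^3)"

definition s_m :: "surfels \<Rightarrow> nat \<Rightarrow> real^3" where "s_m P = fst P"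
definition s_u :: "surfels \<Rightarrow> nat \<Rightarrow> real^3" where "s_u P = fst (snd P)"
definition s_v :: "surfels \<Rightarrow> nat \<Rightarrow> real^3" where "s_v P = fst (snd (snd P))"
definition s_w :: "surfels \<Rightarrow> nat \<Rightarrow> real" where "s_w P = fst (snd (snd (snd P)))"
definition s_col :: "surfels \<Rightarrow> nat \<Rightarrow> real^3" where "s_col P = snd (snd (snd (snd P)))"

definition depth :: "real^3 \<Rightarrow> real^3 \<Rightarrow> surfels \<Rightarrow> nat \<Rightarrow> real" where
  "depth orig \<omega> P i =
     ((s_m P i - orig) \<bullet> (cross3 (s_u P i) (s_v P i))) / (\<omega> \<bullet> (cross3 (s_u P i) (s_v P i)))"

text \<open>Planar Gaussian G(x) = exp(-1/2 (x-m)^T \<Sigma>^{-1} (x-m)) for x in the surfel plane,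
  where \<Sigma>^{-1} is the inverse of \<Sigma> = U U^T on the plane (U = [u v]); writing
  x - m = a u + b v this quadratic form equals a^2 + b^2, with (a,b) obtained from the Gram
  system.\<close>
definition planar_gauss :: "real^3 \<Rightarrow> real^3 \<Rightarrow> real^3 \<Rightarrow> real^3 \<Rightarrow> real" where
  "planar_gauss m u v x =
     (let d = x - m;
          det = (u \<bullet> u) * (v \<bullet> v) - (u \<bullet> v)^2;
          a = ((v \<bullet> v) * (u \<bullet> d) - (u \<bullet> v) * (v \<bullet> d)) / det;
          b = ((u \<bullet> u) * (v \<bullet> d) - (u \<bullet> v) * (u \<bullet> d)) / det
      in exp (- (a^2 + b^2) / 2))"

definition fval :: "real^3 \<Rightarrow> real^3 \<Rightarrow> surfels \<Rightarrow> nat \<Rightarrow> real" where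
  "fval orig \<omega> P i =
     s_w P i * planar_gauss (s_m P i) (s_u P i) (s_v P i) (orig + depth orig \<omega> P i *\<^sub>R \<omega>)"

definition blended :: "real \<Rightarrow> real^3 \<Rightarrow> real^3 \<Rightarrow> nat \<Rightarrow> surfels \<Rightarrow> nat \<Rightarrow> real^3" where
  "blended \<tau> orig \<omega> N P i =
     (1 / (\<Sum>j<N. (1 - exp (- s_w P j)) * exp (- \<tau> * \<bar>depth orig \<omega> P j - depth orig \<omega> P i\<bar>))) *\<^sub>R
     (\<Sum>j<N. ((1 - exp (- s_w P j)) * exp (- \<tau> * \<bar>depth orig \<omega> P j - depth orig \<omega> P i\<bar>)) *\<^sub>R s_col P j)"

definition render :: "real \<Rightarrow> real \<Rightarrow> real^3 \<Rightarrow> real^3 \<Rightarrow> nat \<Rightarrow> surfels \<Rightarrow> (nat \<Rightarrow> nat) \<Rightarrow> real^3" where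
  "render c \<tau> orig \<omega> N P \<sigma> =
     (\<Sum>k<N. ((1 - exp (- gfun c (fval orig \<omega> P (\<sigma> k)))) *
              (\<Prod>j<k. exp (- gfun c (fval orig \<omega> P (\<sigma> j))))) *\<^sub>R blended \<tau> orig \<omega> N P (\<sigma> k))"

definition sorting_perm :: "nat \<Rightarrow> (nat \<Rightarrow> real) \<Rightarrow> (nat \<Rightarrow> nat) \<Rightarrow> bool" where
  "sorting_perm N t \<sigma> \<longleftrightarrow> bij_betw \<sigma> {..<N} {..<N} \<and>
     (\<forall>k l. k \<le> l \<and> l < N \<longrightarrow> t (\<sigma> k) \<le> t (\<sigma> l))"

text \<open>Admissible configurations: positive weights, nondegenerate planar Gaussians, and the ray
  not parallel to any surfel plane (so that it intersects every surfel plane).\<close>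
definition admissible :: "real^3 \<Rightarrow> nat \<Rightarrow> surfels set" where
  "admissible \<omega> N = {P. \<forall>i<N. s_w P i > 0 \<and> \<omega> \<bullet> (cross3 (s_u P i) (s_v P i)) \<noteq> 0}"

end

theory Submission
  imports Defs
begin

(* Rendering is alpha compositing of the blended colours hat c_i with transmittances
   exp (- g (f_i)). For a fixed order of the surfels this is continuous in the surfel parameters:
   Psi is continuous and positive, and on admissible configurations the depths and the Gram
   determinants of the planar Gaussians never vanish in a denominator. The order can only change
   where depths tie, and tied surfels have the same blended colour, since hat c_i depends on i only
   through t_i; grouped by depth levels, the composite does not depend on how ties are broken.
   Near a configuration every order sorting the nearby depths also sorts its own depths, so the
   rendered colour locally agrees with one of finitely many continuous functions, each taking the
   right value at the configuration. *)

lemma std_normal_density_le_1: "std_normal_density x \<le> 1"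
proof -
  have "1 / sqrt (2 * pi) \<le> 1"
    using pi_gt3 by (simp add: real_le_rsqrt)
  then show ?thesis
    unfolding std_normal_density_def by (intro mult_le_one) auto
qed

lemma integrable_std_normal_density_on:
  "A \<in> sets borel \<Longrightarrow> integrable lborel (\<lambda>y. indicator A y *\<^sub>R std_normal_density y)"
  by (intro integrable_mult_indicator) auto

lemma Psi_eq_integral: "Psi x = (LINT y|lborel. indicator {..x} y *\<^sub>R std_normal_density y)"
  unfolding Psi_def set_lebesgue_integral_def ..

lemma Psi_pos: "Psi x > 0"
proof -
  let ?f = "\<lambda>y. indicator {..x} y *\<^sub>R std_normal_density y"
  have nonneg: "AE y in lborel. 0 \<le> ?f y"
    by auto
  have "\<not> (AE y in lborel. ?f y = 0)"
  proof
    assume "AE y in lborel. ?f y = 0"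
    then have "AE y in lborel. y \<notin> {x - 1..x}"
      by (rule eventually_mono) (auto simp: std_normal_density_def split: split_indicator)
    then have "emeasure lborel {x - 1..x} = 0"
      by (subst (asm) AE_iff_measurable[of "{x - 1..x}"]) auto
    then show False
      by simp
  qed
  then show ?thesis
    using integral_nonneg_eq_0_iff_AE[OF integrable_std_normal_density_on nonneg]
      integral_nonneg_AE[OF nonneg]
    unfolding Psi_eq_integral by (simp add: order_less_le)
qed

lemma Psi_increment_le:
  assumes "x \<le> y"
  shows "\<bar>Psi y - Psi x\<bar> \<le> y - x"
proof -
  let ?I = "LINT z|lborel. indicator {x<..y} z *\<^sub>R std_normal_density z"
  have "Psi y - Psi x
      = (LINT z|lborel. indicator {..y} z *\<^sub>R std_normal_density z
                      - indicator {..x} z *\<^sub>R std_normal_density z)"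
    unfolding Psi_eq_integral
    by (intro Bochner_Integration.integral_diff[symmetric] integrable_std_normal_density_on) auto
  also have "\<dots> = ?I"
    using assms by (intro Bochner_Integration.integral_cong) (auto split: split_indicator)
  finally have diff: "Psi y - Psi x = ?I" .
  have "?I \<le> (LINT z|lborel. indicator {x<..y} z)"
    using assms
    by (intro integral_mono integrable_std_normal_density_on integrable_real_indicator)
       (auto simp: std_normal_density_le_1 split: split_indicator)
  also have "\<dots> = y - x"
    using assms by (simp add: measure_def)
  finally show ?thesis
    using diff integral_nonneg_AE[of "\<lambda>z. indicator {x<..y} z *\<^sub>R std_normal_density z"]
    by auto
qed

lemma continuous_on_Psi [continuous_intros]:
  assumes "continuous_on S f"
  shows "continuous_on S (\<lambda>x. Psi (f x))"
proof -
  have "1-lipschitz_on UNIV Psi"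
  proof (rule lipschitz_onI)
    show "dist (Psi x) (Psi y) \<le> 1 * dist x y" for x y
      using Psi_increment_le[of x y] Psi_increment_le[of y x]
      by (cases "x \<le> y") (auto simp: dist_real_def abs_minus_commute)
  qed simp
  then show ?thesis
    using continuous_on_compose2[OF lipschitz_on_continuous_on assms] by blast
qed

definition alpha_composite ::
    "nat \<Rightarrow> (nat \<Rightarrow> real) \<Rightarrow> (nat \<Rightarrow> 'a::real_vector) \<Rightarrow> (nat \<Rightarrow> nat) \<Rightarrow> 'a" where
  "alpha_composite N q b \<sigma> = (\<Sum>k<N. ((1 - q (\<sigma> k)) * (\<Prod>j<k. q (\<sigma> j))) *\<^sub>R b (\<sigma> k))"

lemma alpha_composite_restrict:
  "alpha_composite N q b (restrict \<sigma> {..<N}) = alpha_composite N q b \<sigma>"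
  unfolding alpha_composite_def by (intro sum.cong prod.cong refl arg_cong2[where f = scaleR]) auto

lemma continuous_on_alpha_composite:
  fixes b :: "'a::topological_space \<Rightarrow> nat \<Rightarrow> 'b::real_normed_vector"
  assumes "\<And>i. i < N \<Longrightarrow> continuous_on A (\<lambda>x. q x i)"
    and "\<And>i. i < N \<Longrightarrow> continuous_on A (\<lambda>x. b x i)"
    and "\<And>k. k < N \<Longrightarrow> \<sigma> k < N"
  shows "continuous_on A (\<lambda>x. alpha_composite N (q x) (b x) \<sigma>)"
  unfolding alpha_composite_def by (intro continuous_intros assms) auto

lemma finite_down_closed_eq_lessThan:
  fixes K :: "nat set"
  assumes "finite K" and down: "\<And>k k'. k \<in> K \<Longrightarrow> k' \<le> k \<Longrightarrow> k' \<in> K"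
  shows "K = {..<card K}"
proof (cases "K = {}")
  case False
  have "K = {..Max K}"
  proof
    show "K \<subseteq> {..Max K}"
      using assms(1) by (auto intro: Max_ge)
    show "{..Max K} \<subseteq> K"
      using down Max_in[OF assms(1) False] by auto
  qed
  then show ?thesis
    by (metis card_atMost lessThan_Suc_atMost)
qed simp

text \<open>The positions whose depth satisfies a down-closed predicate form an initial segment of a
  sorted order, so their compositing weights telescope.\<close>

lemma sorting_perm_prefix_telescope:
  fixes q :: "nat \<Rightarrow> real"
  assumes sorted: "sorting_perm N t \<sigma>" and down: "\<And>x y. p y \<Longrightarrow> x \<le> y \<Longrightarrow> p x"
  shows "(\<Sum>k | k < N \<and> p (t (\<sigma> k)). (\<Prod>j<k. q (\<sigma> j)) - (\<Prod>j<Suc k. q (\<sigma> j)))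
       = 1 - (\<Prod>i | i < N \<and> p (t i). q i)"
proof -
  define K where "K = {k. k < N \<and> p (t (\<sigma> k))}"
  have bij: "bij_betw \<sigma> {..<N} {..<N}"
    and mono: "\<And>k l. k \<le> l \<Longrightarrow> l < N \<Longrightarrow> t (\<sigma> k) \<le> t (\<sigma> l)"
    using sorted unfolding sorting_perm_def by auto
  have "K = {..<card K}"
  proof (rule finite_down_closed_eq_lessThan)
    show "finite K"
      by (simp add: K_def)
    show "k' \<in> K" if "k \<in> K" "k' \<le> k" for k k'
      using that down[of "t (\<sigma> k)" "t (\<sigma> k')"] mono[of k' k] by (auto simp: K_def)
  qed
  then obtain m where K: "K = {..<m}"
    by blast
  have inj: "inj_on \<sigma> K"
    by (rule inj_on_subset[of _ "{..<N}"]) (use bij in \<open>auto simp: bij_betw_def K_def\<close>)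
  have "(\<Sum>k\<in>K. (\<Prod>j<k. q (\<sigma> j)) - (\<Prod>j<Suc k. q (\<sigma> j))) = 1 - (\<Prod>j\<in>K. q (\<sigma> j))"
    unfolding K by (subst sum_lessThan_telescope') simp
  also have "(\<Prod>j\<in>K. q (\<sigma> j)) = (\<Prod>i\<in>\<sigma> ` K. q i)"
    using inj by (simp add: prod.reindex)
  also have "\<sigma> ` K = {i. i < N \<and> p (t i)}"
  proof
    show "\<sigma> ` K \<subseteq> {i. i < N \<and> p (t i)}"
      using bij by (auto simp: K_def bij_betw_def)
    show "{i. i < N \<and> p (t i)} \<subseteq> \<sigma> ` K"
      using bij by (auto simp: K_def bij_betw_def)
  qed
  finally show ?thesis
    unfolding K_def .
qed

text \<open>Grouping by depth levels removes the ordering: a level contributes the drop in transmittance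
  across it times its colour, which is well defined because colours agree on ties.\<close>

lemma alpha_composite_by_depth:
  fixes q :: "nat \<Rightarrow> real"
  assumes sorted: "sorting_perm N t \<sigma>"
    and ties: "\<And>i j. i < N \<Longrightarrow> j < N \<Longrightarrow> t i = t j \<Longrightarrow> b i = b j"
  shows "alpha_composite N q b \<sigma>
    = (\<Sum>d\<in>t ` {..<N}. ((\<Prod>i | i < N \<and> t i < d. q i) - (\<Prod>i | i < N \<and> t i \<le> d. q i))
          *\<^sub>R b (SOME i. i < N \<and> t i = d))"
proof -
  define B where "B d = b (SOME i. i < N \<and> t i = d)" for d
  define W where "W k = (\<Prod>j<k. q (\<sigma> j)) - (\<Prod>j<Suc k. q (\<sigma> j))" for k
  have bij: "bij_betw \<sigma> {..<N} {..<N}"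
    using sorted unfolding sorting_perm_def by auto
  have B: "b (\<sigma> k) = B (t (\<sigma> k))" if "k < N" for k
  proof -
    have "\<sigma> k < N"
      using bij that by (auto simp: bij_betw_def)
    then have "\<exists>i. i < N \<and> t i = t (\<sigma> k)"
      by blast
    then have "(SOME i. i < N \<and> t i = t (\<sigma> k)) < N \<and>
        t (SOME i. i < N \<and> t i = t (\<sigma> k)) = t (\<sigma> k)"
      by (rule someI_ex)
    then show ?thesis
      unfolding B_def using \<open>\<sigma> k < N\<close> by (intro ties) auto
  qed
  have level: "(\<Sum>k | k < N \<and> t (\<sigma> k) = d. W k)
      = (\<Prod>i | i < N \<and> t i < d. q i) - (\<Prod>i | i < N \<and> t i \<le> d. q i)" for d
  proof -
    have "{k. k < N \<and> t (\<sigma> k) = d} = {k. k < N \<and> t (\<sigma> k) \<le> d} - {k. k < N \<and> t (\<sigma> k) < d}"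
      by auto
    then have "(\<Sum>k | k < N \<and> t (\<sigma> k) = d. W k)
        = (\<Sum>k | k < N \<and> t (\<sigma> k) \<le> d. W k) - (\<Sum>k | k < N \<and> t (\<sigma> k) < d. W k)"
      by (simp add: sum_diff subset_eq)
    then show ?thesis
      unfolding W_def
      using sorting_perm_prefix_telescope[OF sorted, of "\<lambda>x. x \<le> d" q]
        sorting_perm_prefix_telescope[OF sorted, of "\<lambda>x. x < d" q]
      by simp
  qed
  have "alpha_composite N q b \<sigma> = (\<Sum>k<N. W k *\<^sub>R B (t (\<sigma> k)))"
    unfolding alpha_composite_def W_def by (rule sum.cong) (simp_all add: B algebra_simps)
  also have "\<dots> = (\<Sum>d\<in>(\<lambda>k. t (\<sigma> k)) ` {..<N}. \<Sum>k | k < N \<and> t (\<sigma> k) = d. W k *\<^sub>R B d)"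
    by (subst sum.image_gen[where g = "\<lambda>k. t (\<sigma> k)"]) (auto intro: sum.cong)
  also have "\<dots> = (\<Sum>d\<in>(\<lambda>k. t (\<sigma> k)) ` {..<N}. (\<Sum>k | k < N \<and> t (\<sigma> k) = d. W k) *\<^sub>R B d)"
    by (simp only: scaleR_sum_left)
  also have "(\<lambda>k. t (\<sigma> k)) ` {..<N} = t ` {..<N}"
    using bij by (metis bij_betw_def image_image)
  finally show ?thesis
    by (simp only: level B_def)
qed

lemma alpha_composite_sorting_perm_independent:
  assumes "sorting_perm N t \<sigma>\<^sub>1" and "sorting_perm N t \<sigma>\<^sub>2"
    and "\<And>i j. i < N \<Longrightarrow> j < N \<Longrightarrow> t i = t j \<Longrightarrow> b i = b j"
  shows "alpha_composite N q b \<sigma>\<^sub>1 = alpha_composite N q b \<sigma>\<^sub>2"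
  using alpha_composite_by_depth[OF assms(1,3)] alpha_composite_by_depth[OF assms(2,3)]
  by simp

lemma continuous_on_finite_local_choice:
  fixes g :: "'a::topological_space \<Rightarrow> 'b::topological_space"
  assumes "finite F"
    and cont: "\<And>\<sigma>. \<sigma> \<in> F \<Longrightarrow> continuous_on A (f \<sigma>)"
    and choice: "\<And>x\<^sub>0. x\<^sub>0 \<in> A \<Longrightarrow>
      \<forall>\<^sub>F x in at x\<^sub>0 within A. \<exists>\<sigma>\<in>F. g x = f \<sigma> x \<and> g x\<^sub>0 = f \<sigma> x\<^sub>0"
  shows "continuous_on A g"
  unfolding continuous_on_def
proof (intro ballI topological_tendstoI)
  fix x\<^sub>0 U
  assume x\<^sub>0: "x\<^sub>0 \<in> A" and U: "open U" "g x\<^sub>0 \<in> U"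
  have "\<forall>\<^sub>F x in at x\<^sub>0 within A. \<forall>\<sigma>\<in>{\<sigma>\<in>F. f \<sigma> x\<^sub>0 = g x\<^sub>0}. f \<sigma> x \<in> U"
  proof (rule eventually_ball_finite, use \<open>finite F\<close> in simp, intro ballI)
    fix \<sigma> assume \<sigma>: "\<sigma> \<in> {\<sigma>\<in>F. f \<sigma> x\<^sub>0 = g x\<^sub>0}"
    then have "(f \<sigma> \<longlongrightarrow> f \<sigma> x\<^sub>0) (at x\<^sub>0 within A)"
      using cont x\<^sub>0 unfolding continuous_on_def by blast
    then show "\<forall>\<^sub>F x in at x\<^sub>0 within A. f \<sigma> x \<in> U"
      using U \<sigma> by (auto elim: topological_tendstoD)
  qed
  with choice[OF x\<^sub>0] show "\<forall>\<^sub>F x in at x\<^sub>0 within A. g x \<in> U"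
    by eventually_elim auto
qed

text \<open>Strict inequalities between finitely many continuous depths persist nearby.\<close>

lemma eventually_sorting_perm_at:
  fixes t :: "'a::topological_space \<Rightarrow> nat \<Rightarrow> real"
  assumes cont: "\<And>i. i < N \<Longrightarrow> continuous_on A (\<lambda>x. t x i)" and x\<^sub>0: "x\<^sub>0 \<in> A"
  shows "\<forall>\<^sub>F x in at x\<^sub>0 within A. \<forall>\<sigma>. sorting_perm N (t x) \<sigma> \<longrightarrow> sorting_perm N (t x\<^sub>0) \<sigma>"
proof -
  have strict: "\<forall>\<^sub>F x in at x\<^sub>0 within A. t x\<^sub>0 i < t x\<^sub>0 j \<longrightarrow> t x i < t x j"
    if "i < N" "j < N" for i j
  proof (cases "t x\<^sub>0 i < t x\<^sub>0 j")
    case True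
    have "((\<lambda>x. t x j - t x i) \<longlongrightarrow> t x\<^sub>0 j - t x\<^sub>0 i) (at x\<^sub>0 within A)"
      using cont[OF that(2)] cont[OF that(1)] x\<^sub>0
      by (intro tendsto_diff) (auto simp: continuous_on_def)
    then have "\<forall>\<^sub>F x in at x\<^sub>0 within A. 0 < t x j - t x i"
      by (rule order_tendstoD(1)) (use True in simp)
    then show ?thesis
      by eventually_elim simp
  qed simp
  have "\<forall>\<^sub>F x in at x\<^sub>0 within A. \<forall>i\<in>{..<N}. \<forall>j\<in>{..<N}. t x\<^sub>0 i < t x\<^sub>0 j \<longrightarrow> t x i < t x j"
    using strict by (simp add: eventually_ball_finite_distrib)
  then show ?thesis
  proof eventually_elim
    case (elim x)
    show ?case
    proof (intro allI impI)
      fix \<sigma> assume "sorting_perm N (t x) \<sigma>"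
      then have bij: "bij_betw \<sigma> {..<N} {..<N}"
        and mono: "\<And>k l. k \<le> l \<Longrightarrow> l < N \<Longrightarrow> t x (\<sigma> k) \<le> t x (\<sigma> l)"
        unfolding sorting_perm_def by auto
      have "t x\<^sub>0 (\<sigma> k) \<le> t x\<^sub>0 (\<sigma> l)" if "k \<le> l" "l < N" for k l
      proof (rule ccontr)
        assume "\<not> ?thesis"
        moreover have "\<sigma> k < N" "\<sigma> l < N"
          using bij that by (auto simp: bij_betw_def)
        ultimately have "t x (\<sigma> l) < t x (\<sigma> k)"
          using elim by auto
        with mono[OF that] show False
          by simp
      qed
      with bij show "sorting_perm N (t x\<^sub>0) \<sigma>"
        unfolding sorting_perm_def by blast
    qed
  qed
qed

lemma continuous_on_surfel_params [continuous_intros]: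
  shows "continuous_on S (\<lambda>P. s_m P i)" and "continuous_on S (\<lambda>P. s_u P i)"
    and "continuous_on S (\<lambda>P. s_v P i)" and "continuous_on S (\<lambda>P. s_w P i)"
    and "continuous_on S (\<lambda>P. s_col P i)"
  unfolding s_m_def s_u_def s_v_def s_w_def s_col_def
  by (rule continuous_on_product_then_coordinatewise, intro continuous_intros)+

lemma admissibleD:
  assumes "P \<in> admissible \<omega> N" and "i < N"
  shows "s_w P i > 0" and "\<omega> \<bullet> cross3 (s_u P i) (s_v P i) \<noteq> 0"
  using assms unfolding admissible_def by auto

text \<open>Lagrange's identity: the Gram determinant of u, v is the squared norm of u \<times> v, so the
  Gram system in planar_gauss is solvable whenever the ray is not parallel to the surfel plane.\<close>

lemma gram_det_eq_norm_cross3: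
  "(u \<bullet> u) * (v \<bullet> v) - (u \<bullet> v)\<^sup>2 = (norm (cross3 u v))\<^sup>2"
  using norm_cross_dot[of u v] by (simp add: power_mult_distrib flip: power2_norm_eq_inner)

lemma gram_det_nonzero:
  assumes "\<omega> \<bullet> cross3 u v \<noteq> 0"
  shows "(u \<bullet> u) * (v \<bullet> v) - (u \<bullet> v)\<^sup>2 \<noteq> 0"
  using assms by (auto simp: gram_det_eq_norm_cross3)

lemma continuous_on_depth:
  "i < N \<Longrightarrow> continuous_on (admissible \<omega> N) (\<lambda>P. depth orig \<omega> P i)"
  unfolding depth_def by (intro continuous_intros continuous_on_cross) (auto dest: admissibleD)

lemma continuous_on_fval:
  "i < N \<Longrightarrow> continuous_on (admissible \<omega> N) (\<lambda>P. fval orig \<omega> P i)"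
  unfolding fval_def planar_gauss_def Let_def
  by (intro continuous_intros continuous_on_cross continuous_on_depth)
    (auto dest!: admissibleD(2) gram_det_nonzero)

lemma continuous_on_transmittance:
  "i < N \<Longrightarrow> continuous_on (admissible \<omega> N) (\<lambda>P. exp (- gfun c (fval orig \<omega> P i)))"
  unfolding gfun_def
  by (intro continuous_intros continuous_on_fval) (auto simp: Psi_pos[THEN less_imp_neq, symmetric])

lemma blended_denominator_pos:
  assumes P: "P \<in> admissible \<omega> N" and "i < N"
  shows "(\<Sum>j<N. (1 - exp (- s_w P j)) * exp (- \<tau> * \<bar>depth orig \<omega> P j - depth orig \<omega> P i\<bar>)) > 0"
proof -
  let ?a = "\<lambda>j. (1 - exp (- s_w P j)) * exp (- \<tau> * \<bar>depth orig \<omega> P j - depth orig \<omega> P i\<bar>)"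
  have "0 < ?a i"
    using admissibleD(1)[OF assms] by simp
  also have "\<dots> \<le> sum ?a {..<N}"
    using \<open>i < N\<close> admissibleD(1)[OF P]
    by (intro member_le_sum mult_nonneg_nonneg) (auto intro: less_imp_le)
  finally show ?thesis .
qed

lemma continuous_on_blended:
  "i < N \<Longrightarrow> continuous_on (admissible \<omega> N) (\<lambda>P. blended \<tau> orig \<omega> N P i)"
  unfolding blended_def
  by (intro continuous_intros continuous_on_depth)
    (auto dest: blended_denominator_pos[of _ \<omega> N i \<tau> orig])

lemma render_eq_alpha_composite:
  "render c \<tau> orig \<omega> N P \<sigma>
     = alpha_composite N (\<lambda>i. exp (- gfun c (fval orig \<omega> P i))) (blended \<tau> orig \<omega> N P) \<sigma>"
  unfolding render_def alpha_composite_def ..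

lemma render_restrict:
  "render c \<tau> orig \<omega> N P (restrict \<sigma> {..<N}) = render c \<tau> orig \<omega> N P \<sigma>"
  unfolding render_eq_alpha_composite by (rule alpha_composite_restrict)

lemma render_sorting_perm_independent:
  assumes "sorting_perm N (depth orig \<omega> P) \<sigma>\<^sub>1" and "sorting_perm N (depth orig \<omega> P) \<sigma>\<^sub>2"
  shows "render c \<tau> orig \<omega> N P \<sigma>\<^sub>1 = render c \<tau> orig \<omega> N P \<sigma>\<^sub>2"
  unfolding render_eq_alpha_composite
  by (rule alpha_composite_sorting_perm_independent[OF assms]) (simp add: blended_def)

theorem theorem2:
  fixes c \<tau> :: real and orig \<omega> :: "real^3" and N :: nat
    and ord :: "surfels \<Rightarrow> nat \<Rightarrow> nat"
  assumes "c > 0" and "\<tau> > 0"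
    and "\<forall>P\<in>admissible \<omega> N. sorting_perm N (depth orig \<omega> P) (ord P)"
  shows "continuous_on (admissible \<omega> N) (\<lambda>P. render c \<tau> orig \<omega> N P (ord P))"
proof (rule continuous_on_finite_local_choice)
  let ?A = "admissible \<omega> N" and ?F = "{..<N} \<rightarrow>\<^sub>E {..<N}"
  show "finite ?F"
    by (simp add: finite_PiE)
  show "continuous_on ?A (\<lambda>P. render c \<tau> orig \<omega> N P \<sigma>)" if "\<sigma> \<in> ?F" for \<sigma>
    unfolding render_eq_alpha_composite using that
    by (intro continuous_on_alpha_composite continuous_on_transmittance continuous_on_blended) auto
  fix P\<^sub>0 assume P\<^sub>0: "P\<^sub>0 \<in> ?A"
  have "\<forall>\<^sub>F P in at P\<^sub>0 within ?A. P \<in> ?A"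
    by (simp add: eventually_at_filter)
  moreover have "\<forall>\<^sub>F P in at P\<^sub>0 within ?A.
      \<forall>\<sigma>. sorting_perm N (depth orig \<omega> P) \<sigma> \<longrightarrow> sorting_perm N (depth orig \<omega> P\<^sub>0) \<sigma>"
    by (intro eventually_sorting_perm_at continuous_on_depth P\<^sub>0)
  ultimately show "\<forall>\<^sub>F P in at P\<^sub>0 within ?A. \<exists>\<sigma>\<in>?F.
      render c \<tau> orig \<omega> N P (ord P) = render c \<tau> orig \<omega> N P \<sigma> \<and>
      render c \<tau> orig \<omega> N P\<^sub>0 (ord P\<^sub>0) = render c \<tau> orig \<omega> N P\<^sub>0 \<sigma>"
  proof eventually_elim
    case (elim P)
    then have sorted: "sorting_perm N (depth orig \<omega> P) (ord P)"
      using assms(3) by blast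
    have "render c \<tau> orig \<omega> N P\<^sub>0 (ord P\<^sub>0) = render c \<tau> orig \<omega> N P\<^sub>0 (ord P)"
      using assms(3) P\<^sub>0 elim(2) sorted by (intro render_sorting_perm_independent) auto
    moreover have "restrict (ord P) {..<N} \<in> ?F"
      using sorted by (auto simp: sorting_perm_def bij_betw_def)
    ultimately show ?case
      by (metis render_restrict)
  qed
qed

end
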